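(* Under the standing assumptions of the context, with $C$ defined from $E$ and $\le$ as in the context, the order $\le$ is compatible with $C$, i.e. $x<y<z$ implies $C(x;y,z)\vee C(z;x,y)$; and $C$ satisfies (C8): whenever $C(x;y,z)$ holds there exist $w_1,w_2\in N$ with $C(w_1;y,z)\wedge C(x;y,w_1)\wedge w_1<\min\{y,z\}$ and $C(w_2;y,z)\wedge C(x;y,w_2)\wedge\max\{y,z\}<w_2$.
   Context: Standing assumptions: $(N,E)$ is a countably infinite 3-hypergraph (a set $N$ with a set $E$ of 3-element subsets, the edges) which is ${\le}4$-set-homogeneous (for $s\le4$, whenever $U,V\subseteq N$ of size $s$ carry isomorphic induced subhypergraphs there is $g\in \mathrm{Aut}(N,E)$ with $U^g=V$), and $\le$ is a total order on $N$ preserved by $\mathrm{Aut}(N,E)$. Moreover, for each $i\in\{1,2,3\}$ there is a 4-subset of $N$ containing exactly $i$ edges, and for all $u_1<u_2<u_3<u_4$ in $N$: if $\{u_1,\dots,u_4\}$ contains exactly one edge, it is $\{u_1,u_2,u_3\}$; if it contains exactly two edges, they are $\{u_1,u_3,u_4\}$ and $\{u_2,u_3,u_4\}$; if it contains exactly three edges, they are the three 3-subsets containing $u_1$. The relation $C$ on $N$ is: $C(x;y,z)$ iff either $y=z\ne x$; or $x,y,z$ distinct, $x<\min\{y,z\}$ and $\{x,y,z\}\in E$; or $x,y,z$ distinct, $\max\{y,z\}<x$ and $\{x,y,z\}\notin E$. *)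

theory Defs
  imports Main "HOL-Library.Countable_Set"
begin

definition hypergraph3 :: "'a set \<Rightarrow> 'a set set \<Rightarrow> bool" where
  "hypergraph3 N E \<longleftrightarrow> (\<forall>e\<in>E. e \<subseteq> N \<and> card e = 3)"

definition hg_aut :: "'a set \<Rightarrow> 'a set set \<Rightarrow> ('a \<Rightarrow> 'a) \<Rightarrow> bool" where
  "hg_aut N E g \<longleftrightarrow> bij_betw g N N \<and> (\<forall>A. A \<subseteq> N \<longrightarrow> (A \<in> E \<longleftrightarrow> g ` A \<in> E))"

definition induced_iso :: "'a set set \<Rightarrow> 'a set \<Rightarrow> 'a set \<Rightarrow> bool" where
  "induced_iso E U V \<longleftrightarrow> (\<exists>f. bij_betw f U V \<and> (\<forall>A. A \<subseteq> U \<longrightarrow> (A \<in> E \<longleftrightarrow> f ` A \<in> E)))"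

definition le4_set_homogeneous :: "'a set \<Rightarrow> 'a set set \<Rightarrow> bool" where
  "le4_set_homogeneous N E \<longleftrightarrow>
     (\<forall>U V. U \<subseteq> N \<and> V \<subseteq> N \<and> finite U \<and> finite V \<and> card U \<le> 4 \<and> card V = card U
        \<and> induced_iso E U V \<longrightarrow> (\<exists>g. hg_aut N E g \<and> g ` U = V))"

definition lt :: "'a rel \<Rightarrow> 'a \<Rightarrow> 'a \<Rightarrow> bool" where
  "lt R x y \<longleftrightarrow> (x, y) \<in> R \<and> x \<noteq> y"

definition n_edges :: "'a set set \<Rightarrow> 'a set \<Rightarrow> nat" where
  "n_edges E U = card {e\<in>E. e \<subseteq> U}"

definition Crel :: "'a set set \<Rightarrow> 'a rel \<Rightarrow> 'a \<Rightarrow> 'a \<Rightarrow> 'a \<Rightarrow> bool" where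
  "Crel E R x y z \<longleftrightarrow>
     (y = z \<and> z \<noteq> x)
   \<or> (x \<noteq> y \<and> y \<noteq> z \<and> x \<noteq> z \<and> lt R x y \<and> lt R x z \<and> {x, y, z} \<in> E)
   \<or> (x \<noteq> y \<and> y \<noteq> z \<and> x \<noteq> z \<and> lt R y x \<and> lt R z x \<and> {x, y, z} \<notin> E)"

definition standing_assms :: "'a set \<Rightarrow> 'a set set \<Rightarrow> 'a rel \<Rightarrow> bool" where
  "standing_assms N E R \<longleftrightarrow>
     countable N \<and> infinite N \<and> hypergraph3 N E \<and> le4_set_homogeneous N E
   \<and> linear_order_on N R
   \<and> (\<forall>g x y. hg_aut N E g \<and> x \<in> N \<and> y \<in> N \<and> (x, y) \<in> R \<longrightarrow> (g x, g y) \<in> R)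
   \<and> (\<forall>i\<in>{1,2,3::nat}. \<exists>U. U \<subseteq> N \<and> card U = 4 \<and> n_edges E U = i)
   \<and> (\<forall>u1 u2 u3 u4. u1 \<in> N \<and> u2 \<in> N \<and> u3 \<in> N \<and> u4 \<in> N
        \<and> lt R u1 u2 \<and> lt R u2 u3 \<and> lt R u3 u4 \<longrightarrow>
        (n_edges E {u1,u2,u3,u4} = 1 \<longrightarrow> {e\<in>E. e \<subseteq> {u1,u2,u3,u4}} = {{u1,u2,u3}})
      \<and> (n_edges E {u1,u2,u3,u4} = 2 \<longrightarrow> {e\<in>E. e \<subseteq> {u1,u2,u3,u4}} = {{u1,u3,u4},{u2,u3,u4}})
      \<and> (n_edges E {u1,u2,u3,u4} = 3 \<longrightarrow> {e\<in>E. e \<subseteq> {u1,u2,u3,u4}} = {{u1,u2,u3},{u1,u2,u4},{u1,u3,u4}}))"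

end

theory Submission
  imports Defs
begin

(* By <=4-set-homogeneity, and since automorphisms preserve the order, Aut(N,E) is transitive
   on increasing pairs and on increasing triples of each edge type.  The prescribed edge
   patterns of 4-sets with one, two or three edges each contain exactly one of the two "end"
   triples {u1,u2,u3}, {u2,u3,u4} of the chain u1 < u2 < u3 < u4; so a chain whose end triples
   agree is complete or empty, and gluing the one- and three-edge patterns produces both kinds.
   Moving these four 4-point patterns onto the triple (x, y, z) by an automorphism yields the
   points w1, w2 demanded by (C8); compatibility of the order with C is read off the
   definition. *)

lemma lt_trans:
  assumes "linear_order_on N R" "lt R x y" "lt R y z"
  shows "lt R x z"
  using assms unfolding linear_order_on_def partial_order_on_def preorder_on_def lt_def
    trans_def antisym_def
  by blast

lemma lt_asym: "linear_order_on N R \<Longrightarrow> lt R x y \<Longrightarrow> \<not> lt R y x"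
  unfolding linear_order_on_def partial_order_on_def lt_def antisym_def by blast

lemma lt_total: "linear_order_on N R \<Longrightarrow> x \<in> N \<Longrightarrow> y \<in> N \<Longrightarrow> x \<noteq> y \<Longrightarrow> lt R x y \<or> lt R y x"
  unfolding linear_order_on_def total_on_def lt_def by blast

lemma lt_imp_neq: "lt R x y \<Longrightarrow> x \<noteq> y"
  by (simp add: lt_def)

lemma lt_wlog [consumes 4, case_names less sym]:
  assumes "linear_order_on N R" "a \<in> N" "b \<in> N" "a \<noteq> b"
    and "\<And>a b. a \<in> N \<Longrightarrow> b \<in> N \<Longrightarrow> lt R a b \<Longrightarrow> P a b"
    and "\<And>a b. a \<in> N \<Longrightarrow> b \<in> N \<Longrightarrow> P b a \<Longrightarrow> P a b"
  shows "P a b"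
  using lt_total[OF assms(1-4)] assms(2,3,5,6) by blast

lemma sorted_wrt_lt_distinct: "sorted_wrt (lt R) xs \<Longrightarrow> distinct xs"
  by (induction xs) (auto simp: lt_def)

lemma exists_least:
  assumes "linear_order_on N R" "finite S" "S \<noteq> {}" "S \<subseteq> N"
  shows "\<exists>m\<in>S. \<forall>s\<in>S - {m}. lt R m s"
  using assms(2-4)
proof (induction S rule: finite_ne_induct)
  case (insert x F)
  then obtain m where m: "m \<in> F" "\<forall>s\<in>F - {m}. lt R m s" by blast
  have "x \<noteq> m" using m(1) insert.hyps by blast
  then consider "lt R x m" | "lt R m x" using lt_total[OF assms(1)] m(1) insert.prems by blast
  then show ?case
  proof cases
    case 1
    have "lt R x s" if "s \<in> F" "s \<noteq> x" for s
    proof (cases "s = m")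
      case False
      then show ?thesis using lt_trans[OF assms(1) 1] m(2) that by blast
    qed (use 1 in simp)
    then show ?thesis by blast
  qed (use m in blast)
qed simp

lemma exists_sorted_listing:
  assumes "linear_order_on N R" "finite S" "S \<subseteq> N"
  shows "\<exists>xs. set xs = S \<and> sorted_wrt (lt R) xs"
  using assms(2,3)
proof (induction S rule: finite_remove_induct)
  case (remove A)
  obtain m where m: "m \<in> A" "\<forall>s\<in>A - {m}. lt R m s"
    using exists_least[OF assms(1) remove.hyps(1,2) remove.prems] by blast
  obtain xs where "set xs = A - {m}" "sorted_wrt (lt R) xs"
    using remove.IH[OF m(1)] remove.prems by blast
  then have "set (m # xs) = A \<and> sorted_wrt (lt R) (m # xs)" using m by auto
  then show ?case by blast
qed simp

lemma sorted_listing_unique: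
  assumes "linear_order_on N R" "sorted_wrt (lt R) xs" "sorted_wrt (lt R) ys" "set xs = set ys"
  shows "xs = ys"
  using assms(2-4)
proof (induction xs arbitrary: ys)
  case (Cons x xs)
  then obtain y ys' where ys: "ys = y # ys'" by (cases ys) auto
  have "x \<in> set (y # ys')" "y \<in> set (x # xs)" using Cons.prems(3) ys by auto
  then have "x = y" using Cons.prems(1,2) lt_asym[OF assms(1), of x y] unfolding ys by auto
  moreover have "x \<notin> set xs" "y \<notin> set ys'" using Cons.prems unfolding ys by (auto simp: lt_def)
  ultimately have "set xs = set ys'" using Cons.prems(3) unfolding ys by auto
  then show ?case using Cons ys \<open>x = y\<close> by simp
qed simp

lemma sorted_listing_card4:
  assumes "linear_order_on N R" "U \<subseteq> N" "card U = 4"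
  obtains u1 u2 u3 u4 where "U = {u1, u2, u3, u4}" "sorted_wrt (lt R) [u1, u2, u3, u4]"
proof -
  have "finite U" using assms(3) card.infinite by fastforce
  then obtain xs where xs: "set xs = U" "sorted_wrt (lt R) xs"
    using exists_sorted_listing[OF assms(1) _ assms(2)] by blast
  then have "length xs = 4" using assms(3) distinct_card[OF sorted_wrt_lt_distinct] by metis
  then obtain u1 u2 u3 u4 where "xs = [u1, u2, u3, u4]"
    by (auto simp: length_Suc_conv numeral_eq_Suc)
  with xs that show ?thesis by auto
qed

lemma chain4_triples_distinct:
  assumes "distinct [a, b, c, d]"
  shows "{a, b, c} \<noteq> {a, b, d}" "{a, b, c} \<noteq> {a, c, d}" "{a, b, c} \<noteq> {b, c, d}"
    "{a, b, d} \<noteq> {a, c, d}" "{a, b, d} \<noteq> {b, c, d}" "{a, c, d} \<noteq> {b, c, d}"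
  using assms by (metis distinct_length_2_or_more insertE insertI1 insert_commute singletonD)+

lemma three_subset_of_four:
  assumes "distinct [a, b, c, d]" "T \<subseteq> {a, b, c, d}" "card T = 3"
  shows "T \<in> {{a, b, c}, {a, b, d}, {a, c, d}, {b, c, d}}"
proof -
  have "card {a, b, c, d} = 4" using assms(1) by simp
  then have "T \<noteq> {a, b, c, d}" using assms(3) by auto
  then obtain t where t: "t \<in> {a, b, c, d}" "t \<notin> T" using assms(2) by blast
  then have "T \<subseteq> {a, b, c, d} - {t}" using assms(2) by blast
  moreover have "card ({a, b, c, d} - {t}) = 3" using \<open>card {a, b, c, d} = 4\<close> t(1) by simp
  ultimately have "T = {a, b, c, d} - {t}" using assms(3) by (simp add: card_seteq)
  with t(1) assms(1) show ?thesis by auto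
qed

lemma edges_within_iff: "{e\<in>E. e \<subseteq> U} = S \<Longrightarrow> T \<subseteq> U \<Longrightarrow> T \<in> E \<longleftrightarrow> T \<in> S"
  by blast

lemma Crel_equal: "y \<noteq> x \<Longrightarrow> Crel E R x y y"
  by (simp add: Crel_def)

lemma Crel_below: "lt R x y \<Longrightarrow> lt R x z \<Longrightarrow> y \<noteq> z \<Longrightarrow> {x, y, z} \<in> E \<Longrightarrow> Crel E R x y z"
  unfolding Crel_def lt_def by blast

lemma Crel_above: "lt R y x \<Longrightarrow> lt R z x \<Longrightarrow> y \<noteq> z \<Longrightarrow> {x, y, z} \<notin> E \<Longrightarrow> Crel E R x y z"
  unfolding Crel_def lt_def by blast

lemma Crel_cases [consumes 1, case_names equal below above]:
  assumes "Crel E R x y z"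
  obtains "y = z" "z \<noteq> x"
    | "y \<noteq> z" "lt R x y" "lt R x z" "{x, y, z} \<in> E"
    | "y \<noteq> z" "lt R y x" "lt R z x" "{x, y, z} \<notin> E"
  using assms unfolding Crel_def by blast

locale ordered_homogeneous_hypergraph =
  fixes N :: "'a set" and E :: "'a set set" and R :: "'a rel"
  assumes standing: "standing_assms N E R"
begin

lemma linear: "linear_order_on N R"
  using standing by (simp add: standing_assms_def)

lemma edge_card: "e \<in> E \<Longrightarrow> card e = 3"
  using standing by (simp add: standing_assms_def hypergraph3_def)

lemma pair_not_edge: "{a, b} \<notin> E"
  using edge_card[of "{a, b}"] by (auto simp: card_insert_if split: if_splits)

lemma aut_in: "hg_aut N E g \<Longrightarrow> x \<in> N \<Longrightarrow> g x \<in> N"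
  unfolding hg_aut_def by (meson bij_betw_apply)

lemma aut_lt:
  assumes "hg_aut N E g" "x \<in> N" "y \<in> N" "lt R x y"
  shows "lt R (g x) (g y)"
proof -
  have "\<forall>g x y. hg_aut N E g \<and> x \<in> N \<and> y \<in> N \<and> (x, y) \<in> R \<longrightarrow> (g x, g y) \<in> R"
    using standing by (simp add: standing_assms_def)
  then have "(g x, g y) \<in> R" using assms unfolding lt_def by blast
  moreover have "g x \<noteq> g y"
    using assms unfolding hg_aut_def bij_betw_def inj_on_def lt_def by blast
  ultimately show ?thesis by (simp add: lt_def)
qed

lemma aut_triple_edge_iff:
  assumes "hg_aut N E g" "a \<in> N" "b \<in> N" "c \<in> N"
  shows "{g a, g b, g c} \<in> E \<longleftrightarrow> {a, b, c} \<in> E"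
proof -
  have "{a, b, c} \<subseteq> N" using assms(2-4) by blast
  then show ?thesis using assms(1) unfolding hg_aut_def by auto
qed

lemma edge_within_small_set:
  assumes "finite U" "card U \<le> 3" "A \<subseteq> U" "A \<in> E"
  shows "A = U"
proof -
  have "card U \<le> card A" using edge_card[OF assms(4)] assms(2) by simp
  then show ?thesis using card_seteq[OF assms(1,3)] by blast
qed

lemma small_sets_homogeneous:
  assumes "U \<subseteq> N" "V \<subseteq> N" "finite U" "finite V" "card V = card U" "card U \<le> 3"
    and "U \<in> E \<longleftrightarrow> V \<in> E"
  shows "\<exists>g. hg_aut N E g \<and> g ` U = V"
proof -
  obtain f where f: "bij_betw f U V" using finite_same_card_bij[OF assms(3,4)] assms(5) by auto
  have "A \<in> E \<longleftrightarrow> f ` A \<in> E" if "A \<subseteq> U" for A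
  proof -
    have "f ` A \<subseteq> V" using that f by (auto simp: bij_betw_def)
    moreover have "card V \<le> 3" using assms(5,6) by simp
    ultimately have "f ` A \<in> E \<longleftrightarrow> f ` A = V \<and> V \<in> E"
      using edge_within_small_set[OF assms(4)] by blast
    moreover have "A \<in> E \<longleftrightarrow> A = U \<and> U \<in> E"
      using edge_within_small_set[OF assms(3,6) that] by blast
    moreover have "f ` A = V \<longleftrightarrow> A = U"
      using that f unfolding bij_betw_def by (auto simp: inj_on_image_eq_iff)
    ultimately show ?thesis using assms(7) by blast
  qed
  then have "induced_iso E U V" unfolding induced_iso_def using f by blast
  moreover have "le4_set_homogeneous N E" using standing by (simp add: standing_assms_def)
  moreover have "card U \<le> 4" using assms(6) by simp
  ultimately show ?thesis using assms(1-5) unfolding le4_set_homogeneous_def by blast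
qed

lemma sorted_lists_transitive:
  assumes "sorted_wrt (lt R) us" "sorted_wrt (lt R) vs" "set us \<subseteq> N" "set vs \<subseteq> N"
    and "length vs = length us" "length us \<le> 3" "set us \<in> E \<longleftrightarrow> set vs \<in> E"
  shows "\<exists>g. hg_aut N E g \<and> map g us = vs"
proof -
  have "card (set us) = length us" "card (set vs) = length vs"
    using distinct_card sorted_wrt_lt_distinct assms(1,2) by blast+
  then obtain g where g: "hg_aut N E g" "g ` set us = set vs"
    using small_sets_homogeneous[OF assms(3,4)] assms(5-7) by auto
  have "sorted_wrt (lt R) (map g us)"
    unfolding sorted_wrt_map
    by (rule sorted_wrt_mono_rel[OF _ assms(1)]) (use aut_lt[OF g(1)] assms(3) in blast)
  moreover have "set (map g us) = set vs" using g(2) by simp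
  ultimately have "map g us = vs" using sorted_listing_unique[OF linear _ assms(2)] by blast
  with g(1) show ?thesis by blast
qed

corollary pair_transitive:
  assumes "u \<in> N" "v \<in> N" "x \<in> N" "y \<in> N" "lt R u v" "lt R x y"
  shows "\<exists>g. hg_aut N E g \<and> g u = x \<and> g v = y"
proof -
  have "\<exists>g. hg_aut N E g \<and> map g [u, v] = [x, y]"
    by (rule sorted_lists_transitive) (use assms pair_not_edge in auto)
  then show ?thesis by simp
qed

corollary triple_transitive:
  assumes "p \<in> N" "q \<in> N" "r \<in> N" "x \<in> N" "y \<in> N" "z \<in> N"
    and "lt R p q" "lt R q r" "lt R x y" "lt R y z" "{p, q, r} \<in> E \<longleftrightarrow> {x, y, z} \<in> E"
  shows "\<exists>g. hg_aut N E g \<and> g p = x \<and> g q = y \<and> g r = z"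
proof -
  have "lt R p r" "lt R x z" using lt_trans[OF linear] assms(7-10) by blast+
  then have "\<exists>g. hg_aut N E g \<and> map g [p, q, r] = [x, y, z]"
    by (intro sorted_lists_transitive) (use assms in auto)
  then show ?thesis by simp
qed

lemma chain4_edge_patterns:
  assumes "{u1, u2, u3, u4} \<subseteq> N" "sorted_wrt (lt R) [u1, u2, u3, u4]"
  defines "S \<equiv> {e\<in>E. e \<subseteq> {u1, u2, u3, u4}}"
  shows "card S = 1 \<Longrightarrow> S = {{u1, u2, u3}}"
    and "card S = 2 \<Longrightarrow> S = {{u1, u3, u4}, {u2, u3, u4}}"
    and "card S = 3 \<Longrightarrow> S = {{u1, u2, u3}, {u1, u2, u4}, {u1, u3, u4}}"
proof -
  have "\<forall>u1 u2 u3 u4. u1 \<in> N \<and> u2 \<in> N \<and> u3 \<in> N \<and> u4 \<in> N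
        \<and> lt R u1 u2 \<and> lt R u2 u3 \<and> lt R u3 u4 \<longrightarrow>
        (n_edges E {u1,u2,u3,u4} = 1 \<longrightarrow> {e\<in>E. e \<subseteq> {u1,u2,u3,u4}} = {{u1,u2,u3}})
      \<and> (n_edges E {u1,u2,u3,u4} = 2 \<longrightarrow> {e\<in>E. e \<subseteq> {u1,u2,u3,u4}} = {{u1,u3,u4},{u2,u3,u4}})
      \<and> (n_edges E {u1,u2,u3,u4} = 3 \<longrightarrow>
           {e\<in>E. e \<subseteq> {u1,u2,u3,u4}} = {{u1,u2,u3},{u1,u2,u4},{u1,u3,u4}})"
    using standing unfolding standing_assms_def by (elim conjE) assumption
  then show "card S = 1 \<Longrightarrow> S = {{u1, u2, u3}}"
    and "card S = 2 \<Longrightarrow> S = {{u1, u3, u4}, {u2, u3, u4}}"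
    and "card S = 3 \<Longrightarrow> S = {{u1, u2, u3}, {u1, u2, u4}, {u1, u3, u4}}"
    using assms unfolding n_edges_def by simp_all
qed

lemma chain4_uniform_if_ends_agree:
  assumes "{u1, u2, u3, u4} \<subseteq> N" "sorted_wrt (lt R) [u1, u2, u3, u4]"
    and ends: "{u1, u2, u3} \<in> E \<longleftrightarrow> {u2, u3, u4} \<in> E"
  shows "{u1, u2, u4} \<in> E \<longleftrightarrow> {u1, u2, u3} \<in> E" "{u1, u3, u4} \<in> E \<longleftrightarrow> {u1, u2, u3} \<in> E"
proof -
  define F where "F = {{u1, u2, u3}, {u1, u2, u4}, {u1, u3, u4}, {u2, u3, u4}}"
  define S where "S = {e\<in>E. e \<subseteq> {u1, u2, u3, u4}}"
  have d: "distinct [u1, u2, u3, u4]" using assms(2) by (rule sorted_wrt_lt_distinct)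
  note neq = chain4_triples_distinct[OF d]
  note patterns = chain4_edge_patterns[OF assms(1,2), folded S_def]
  have "S \<subseteq> F" unfolding S_def F_def using three_subset_of_four[OF d] edge_card by blast
  have in_S: "T \<in> S \<longleftrightarrow> T \<in> E" if "T \<in> F" for T using that unfolding S_def F_def by blast
  then have first: "{u1, u2, u3} \<in> S \<longleftrightarrow> {u1, u2, u3} \<in> E"
    and last: "{u2, u3, u4} \<in> S \<longleftrightarrow> {u2, u3, u4} \<in> E" unfolding F_def by simp_all
  \<comment> \<open>each of the three admissible patterns contains exactly one of the two end triples\<close>
  have "card S \<noteq> 1"
  proof
    assume "card S = 1"
    then have "{u1, u2, u3} \<in> S" "{u2, u3, u4} \<notin> S" using patterns(1) neq by auto
    then show False using first last ends by blast
  qed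
  moreover have "card S \<noteq> 2"
  proof
    assume "card S = 2"
    then have "{u1, u2, u3} \<notin> S" "{u2, u3, u4} \<in> S" using patterns(2) neq by auto
    then show False using first last ends by blast
  qed
  moreover have "card S \<noteq> 3"
  proof
    assume "card S = 3"
    then have "{u1, u2, u3} \<in> S" "{u2, u3, u4} \<notin> S" using patterns(3) neq by auto
    then show False using first last ends by blast
  qed
  moreover have "card F = 4" unfolding F_def using neq by simp
  moreover have "finite F" unfolding F_def by simp
  ultimately have "card S = 0 \<or> card S = card F"
    using card_mono[OF _ \<open>S \<subseteq> F\<close>] by linarith
  moreover have "finite S" using \<open>S \<subseteq> F\<close> \<open>finite F\<close> by (rule finite_subset)
  ultimately have "S = {} \<or> S = F"
    using \<open>S \<subseteq> F\<close> \<open>finite F\<close> by (metis card_0_eq card_seteq order_refl)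
  then show "{u1, u2, u4} \<in> E \<longleftrightarrow> {u1, u2, u3} \<in> E" "{u1, u3, u4} \<in> E \<longleftrightarrow> {u1, u2, u3} \<in> E"
    using in_S unfolding F_def by auto
qed

lemma exists_chain4_with_edge_count:
  assumes "i \<in> {1, 2, 3}"
  obtains u1 u2 u3 u4 where "{u1, u2, u3, u4} \<subseteq> N" "sorted_wrt (lt R) [u1, u2, u3, u4]"
    "card {e\<in>E. e \<subseteq> {u1, u2, u3, u4}} = i"
proof -
  have "\<forall>i\<in>{1,2,3::nat}. \<exists>U. U \<subseteq> N \<and> card U = 4 \<and> n_edges E U = i"
    using standing unfolding standing_assms_def by (elim conjE) assumption
  then obtain U where U: "U \<subseteq> N" "card U = 4" "n_edges E U = i" using assms by blast
  obtain u1 u2 u3 u4 where "U = {u1, u2, u3, u4}" "sorted_wrt (lt R) [u1, u2, u3, u4]"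
    using sorted_listing_card4[OF linear U(1,2)] by blast
  with U that show ?thesis unfolding n_edges_def by blast
qed

lemma exists_chain4_one_edge:
  obtains u1 u2 u3 u4 where "{u1, u2, u3, u4} \<subseteq> N" "sorted_wrt (lt R) [u1, u2, u3, u4]"
    "{u1, u2, u3} \<in> E" "{u1, u2, u4} \<notin> E" "{u1, u3, u4} \<notin> E" "{u2, u3, u4} \<notin> E"
proof -
  obtain u1 u2 u3 u4 where u: "{u1, u2, u3, u4} \<subseteq> N" "sorted_wrt (lt R) [u1, u2, u3, u4]"
    and n: "card {e\<in>E. e \<subseteq> {u1, u2, u3, u4}} = 1"
    using exists_chain4_with_edge_count[of 1] by blast
  from n have S: "{e\<in>E. e \<subseteq> {u1, u2, u3, u4}} = {{u1, u2, u3}}"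
    by (rule chain4_edge_patterns(1)[OF u])
  note neq = chain4_triples_distinct[OF sorted_wrt_lt_distinct[OF u(2)]]
  have "{u1, u2, u3} \<in> E" "{u1, u2, u4} \<notin> E" "{u1, u3, u4} \<notin> E" "{u2, u3, u4} \<notin> E"
    using edges_within_iff[OF S] neq by (simp_all add: insert_commute)
  with u that show ?thesis by blast
qed

lemma exists_chain4_three_edges:
  obtains u1 u2 u3 u4 where "{u1, u2, u3, u4} \<subseteq> N" "sorted_wrt (lt R) [u1, u2, u3, u4]"
    "{u1, u2, u3} \<in> E" "{u1, u2, u4} \<in> E" "{u1, u3, u4} \<in> E" "{u2, u3, u4} \<notin> E"
proof -
  obtain u1 u2 u3 u4 where u: "{u1, u2, u3, u4} \<subseteq> N" "sorted_wrt (lt R) [u1, u2, u3, u4]"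
    and n: "card {e\<in>E. e \<subseteq> {u1, u2, u3, u4}} = 3"
    using exists_chain4_with_edge_count[of 3] by blast
  from n have S: "{e\<in>E. e \<subseteq> {u1, u2, u3, u4}} = {{u1, u2, u3}, {u1, u2, u4}, {u1, u3, u4}}"
    by (rule chain4_edge_patterns(3)[OF u])
  note neq = chain4_triples_distinct[OF sorted_wrt_lt_distinct[OF u(2)]]
  have "{u1, u2, u3} \<in> E" "{u1, u2, u4} \<in> E" "{u1, u3, u4} \<in> E" "{u2, u3, u4} \<notin> E"
    using edges_within_iff[OF S] neq by (simp_all add: insert_commute)
  with u that show ?thesis by blast
qed

lemma exists_chain4_complete:
  obtains u1 u2 u3 u4 where "{u1, u2, u3, u4} \<subseteq> N" "sorted_wrt (lt R) [u1, u2, u3, u4]"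
    "{u1, u2, u3} \<in> E" "{u1, u2, u4} \<in> E" "{u1, u3, u4} \<in> E" "{u2, u3, u4} \<in> E"
proof -
  obtain u1 u2 u3 u4 where u: "{u1, u2, u3, u4} \<subseteq> N" "sorted_wrt (lt R) [u1, u2, u3, u4]"
    "{u1, u2, u3} \<in> E" "{u1, u2, u4} \<notin> E" "{u1, u3, u4} \<notin> E" "{u2, u3, u4} \<notin> E"
    by (rule exists_chain4_one_edge)
  obtain v1 v2 v3 v4 where v: "{v1, v2, v3, v4} \<subseteq> N" "sorted_wrt (lt R) [v1, v2, v3, v4]"
    "{v1, v2, v3} \<in> E" "{v1, v2, v4} \<in> E" "{v1, v3, v4} \<in> E" "{v2, v3, v4} \<notin> E"
    by (rule exists_chain4_three_edges)
  \<comment> \<open>copying \<open>v1\<close> below \<open>u1\<close> makes both end triples of \<open>w < u1 < u2 < u3\<close> edges\<close>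
  obtain g where g: "hg_aut N E g" "g v2 = u1" "g v3 = u2" "g v4 = u4"
    using triple_transitive[of v2 v3 v4 u1 u2 u4] u v by auto
  define w where "w = g v1"
  have "w \<in> N" using aut_in[OF g(1)] v(1) unfolding w_def by simp
  have "lt R w u1" using aut_lt[OF g(1), of v1 v2] v g(2) unfolding w_def by simp
  have "{w, u1, u2} \<in> E"
    using aut_triple_edge_iff[OF g(1), of v1 v2 v3] g(2,3) v(1,3) unfolding w_def by simp
  have "lt R w u2" "lt R w u3" using lt_trans[OF linear \<open>lt R w u1\<close>] u(2) by simp_all
  then have chain: "sorted_wrt (lt R) [w, u1, u2, u3]" using \<open>lt R w u1\<close> u(2) by simp
  then have "{w, u1, u3} \<in> E" "{w, u2, u3} \<in> E"
    using chain4_uniform_if_ends_agree[of w u1 u2 u3] \<open>w \<in> N\<close> \<open>{w, u1, u2} \<in> E\<close> u by simp_all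
  moreover have "{w, u1, u2, u3} \<subseteq> N" using \<open>w \<in> N\<close> u(1) by simp
  ultimately show ?thesis using that chain \<open>{w, u1, u2} \<in> E\<close> u(3) by blast
qed

lemma exists_chain4_empty:
  obtains u1 u2 u3 u4 where "{u1, u2, u3, u4} \<subseteq> N" "sorted_wrt (lt R) [u1, u2, u3, u4]"
    "{u1, u2, u3} \<notin> E" "{u1, u2, u4} \<notin> E" "{u1, u3, u4} \<notin> E" "{u2, u3, u4} \<notin> E"
proof -
  obtain u1 u2 u3 u4 where u: "{u1, u2, u3, u4} \<subseteq> N" "sorted_wrt (lt R) [u1, u2, u3, u4]"
    "{u1, u2, u3} \<in> E" "{u1, u2, u4} \<notin> E" "{u1, u3, u4} \<notin> E" "{u2, u3, u4} \<notin> E"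
    by (rule exists_chain4_one_edge)
  obtain v1 v2 v3 v4 where v: "{v1, v2, v3, v4} \<subseteq> N" "sorted_wrt (lt R) [v1, v2, v3, v4]"
    "{v1, v2, v3} \<in> E" "{v1, v2, v4} \<in> E" "{v1, v3, v4} \<in> E" "{v2, v3, v4} \<notin> E"
    by (rule exists_chain4_three_edges)
  \<comment> \<open>copying \<open>u4\<close> above \<open>v4\<close> makes both end triples of \<open>v2 < v3 < v4 < w\<close> non-edges\<close>
  obtain g where g: "hg_aut N E g" "g u1 = v1" "g u2 = v3" "g u3 = v4"
    using triple_transitive[of u1 u2 u3 v1 v3 v4] u v by auto
  define w where "w = g u4"
  have "w \<in> N" using aut_in[OF g(1)] u(1) unfolding w_def by simp
  have "lt R v4 w" using aut_lt[OF g(1), of u3 u4] u g(4) unfolding w_def by simp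
  have "{v3, v4, w} \<notin> E"
    using aut_triple_edge_iff[OF g(1), of u2 u3 u4] g(3,4) u(1,6) unfolding w_def by simp
  have "lt R v2 w" "lt R v3 w" using lt_trans[OF linear _ \<open>lt R v4 w\<close>] v(2) by simp_all
  then have chain: "sorted_wrt (lt R) [v2, v3, v4, w]" using \<open>lt R v4 w\<close> v(2) by simp
  then have "{v2, v3, w} \<notin> E" "{v2, v4, w} \<notin> E"
    using chain4_uniform_if_ends_agree[of v2 v3 v4 w] \<open>w \<in> N\<close> \<open>{v3, v4, w} \<notin> E\<close> v by simp_all
  moreover have "{v2, v3, v4, w} \<subseteq> N" using \<open>w \<in> N\<close> v(1) by simp
  ultimately show ?thesis using that chain \<open>{v3, v4, w} \<notin> E\<close> v(6) by blast
qed

lemma exists_increasing_triple: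
  obtains p q r where "p \<in> N" "q \<in> N" "r \<in> N" "lt R p q" "lt R q r" "{p, q, r} \<in> E \<longleftrightarrow> b"
proof -
  obtain u1 u2 u3 u4 where u: "{u1, u2, u3, u4} \<subseteq> N" "sorted_wrt (lt R) [u1, u2, u3, u4]"
    "{u1, u2, u3} \<in> E" "{u1, u2, u4} \<notin> E" "{u1, u3, u4} \<notin> E" "{u2, u3, u4} \<notin> E"
    by (rule exists_chain4_one_edge)
  show ?thesis
  proof (cases b)
    case True
    then show ?thesis using that[of u1 u2 u3] u by simp
  next
    case False
    then show ?thesis using that[of u2 u3 u4] u by simp
  qed
qed

lemma exists_between:
  assumes "x \<in> N" "y \<in> N" "lt R x y"
  shows "\<exists>w\<in>N. lt R x w \<and> lt R w y \<and> ({x, w, y} \<in> E \<longleftrightarrow> b)"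
proof -
  obtain p q r where t: "p \<in> N" "q \<in> N" "r \<in> N" "lt R p q" "lt R q r" "{p, q, r} \<in> E \<longleftrightarrow> b"
    by (rule exists_increasing_triple)
  have "lt R p r" using lt_trans[OF linear t(4,5)] .
  then obtain g where g: "hg_aut N E g" "g p = x" "g r = y"
    using pair_transitive[of p r x y] t assms by blast
  have "lt R x (g q)" "lt R (g q) y" using aut_lt[OF g(1)] t g(2,3) by metis+
  moreover have "{x, g q, y} \<in> E \<longleftrightarrow> b" using aut_triple_edge_iff[OF g(1)] t g(2,3) by metis
  ultimately show ?thesis using aut_in[OF g(1) t(2)] by blast
qed

lemma exists_above:
  assumes "x \<in> N" "y \<in> N" "lt R x y"
  shows "\<exists>w\<in>N. lt R y w \<and> ({x, y, w} \<in> E \<longleftrightarrow> b)"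
proof -
  obtain p q r where t: "p \<in> N" "q \<in> N" "r \<in> N" "lt R p q" "lt R q r" "{p, q, r} \<in> E \<longleftrightarrow> b"
    by (rule exists_increasing_triple)
  obtain g where g: "hg_aut N E g" "g p = x" "g q = y"
    using pair_transitive[of p q x y] t assms by blast
  have "lt R y (g r)" using aut_lt[OF g(1)] t g(3) by metis
  moreover have "{x, y, g r} \<in> E \<longleftrightarrow> b" using aut_triple_edge_iff[OF g(1)] t g(2,3) by metis
  ultimately show ?thesis using aut_in[OF g(1) t(3)] by blast
qed

lemma exists_below:
  assumes "x \<in> N" "y \<in> N" "lt R x y"
  shows "\<exists>w\<in>N. lt R w x \<and> ({w, x, y} \<in> E \<longleftrightarrow> b)"
proof -
  obtain p q r where t: "p \<in> N" "q \<in> N" "r \<in> N" "lt R p q" "lt R q r" "{p, q, r} \<in> E \<longleftrightarrow> b"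
    by (rule exists_increasing_triple)
  obtain g where g: "hg_aut N E g" "g q = x" "g r = y"
    using pair_transitive[of q r x y] t assms by blast
  have "lt R (g p) x" using aut_lt[OF g(1)] t g(2) by metis
  moreover have "{g p, x, y} \<in> E \<longleftrightarrow> b" using aut_triple_edge_iff[OF g(1)] t g(2,3) by metis
  ultimately show ?thesis using aut_in[OF g(1) t(1)] by blast
qed

lemma extend_edge_below:
  assumes "a \<in> N" "b \<in> N" "a \<noteq> b" "x \<in> N" "lt R x a" "lt R x b" "{x, a, b} \<in> E"
  shows "\<exists>w\<in>N. lt R x w \<and> lt R w a \<and> lt R w b \<and> {w, a, b} \<in> E \<and> {x, a, w} \<in> E \<and> {x, b, w} \<in> E"
  using linear assms
proof (induction a b rule: lt_wlog)
  case (less a b)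
  obtain s1 s2 s3 s4 where s: "{s1, s2, s3, s4} \<subseteq> N" "sorted_wrt (lt R) [s1, s2, s3, s4]"
    "{s1, s2, s3} \<in> E" "{s1, s2, s4} \<in> E" "{s1, s3, s4} \<in> E" "{s2, s3, s4} \<in> E"
    by (rule exists_chain4_complete)
  obtain g where g: "hg_aut N E g" "g s1 = x" "g s3 = a" "g s4 = b"
    using triple_transitive[of s1 s3 s4 x a b] s less by auto
  have "lt R x (g s2)" "lt R (g s2) a"
    using aut_lt[OF g(1), of s1 s2] aut_lt[OF g(1), of s2 s3] s(1,2) g(2,3) by simp_all
  moreover have "{g s2, a, b} \<in> E" "{x, a, g s2} \<in> E" "{x, b, g s2} \<in> E"
    using aut_triple_edge_iff[OF g(1), of s2 s3 s4] aut_triple_edge_iff[OF g(1), of s1 s3 s2]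
      aut_triple_edge_iff[OF g(1), of s1 s4 s2] s g(2-4)
    by (simp_all add: insert_commute)
  ultimately show ?case
    using aut_in[OF g(1)] s(1) lt_trans[OF linear _ less(3)] by blast
next
  case (sym a b)
  then show ?case by (auto simp: insert_commute)
qed

lemma extend_edge_above:
  assumes "a \<in> N" "b \<in> N" "a \<noteq> b" "x \<in> N" "lt R x a" "lt R x b" "{x, a, b} \<in> E"
  shows "\<exists>w\<in>N. lt R a w \<and> lt R b w \<and> {a, b, w} \<notin> E \<and> {x, a, w} \<in> E \<and> {x, b, w} \<in> E"
  using linear assms
proof (induction a b rule: lt_wlog)
  case (less a b)
  obtain s1 s2 s3 s4 where s: "{s1, s2, s3, s4} \<subseteq> N" "sorted_wrt (lt R) [s1, s2, s3, s4]"
    "{s1, s2, s3} \<in> E" "{s1, s2, s4} \<in> E" "{s1, s3, s4} \<in> E" "{s2, s3, s4} \<notin> E"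
    by (rule exists_chain4_three_edges)
  obtain g where g: "hg_aut N E g" "g s1 = x" "g s2 = a" "g s3 = b"
    using triple_transitive[of s1 s2 s3 x a b] s less by auto
  have "lt R a (g s4)" "lt R b (g s4)"
    using aut_lt[OF g(1), of s2 s4] aut_lt[OF g(1), of s3 s4] s(1,2) g(3,4) by simp_all
  moreover have "{a, b, g s4} \<notin> E" "{x, a, g s4} \<in> E" "{x, b, g s4} \<in> E"
    using aut_triple_edge_iff[OF g(1), of s2 s3 s4] aut_triple_edge_iff[OF g(1), of s1 s2 s4]
      aut_triple_edge_iff[OF g(1), of s1 s3 s4] s g(2-4)
    by simp_all
  ultimately show ?case using aut_in[OF g(1)] s(1) by blast
next
  case (sym a b)
  then show ?case by (auto simp: insert_commute)
qed

lemma extend_nonedge_below: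
  assumes "a \<in> N" "b \<in> N" "a \<noteq> b" "x \<in> N" "lt R a x" "lt R b x" "{a, b, x} \<notin> E"
  shows "\<exists>w\<in>N. lt R w a \<and> lt R w b \<and> {w, a, b} \<in> E \<and> {w, a, x} \<notin> E \<and> {w, b, x} \<notin> E"
  using linear assms
proof (induction a b rule: lt_wlog)
  case (less a b)
  obtain s1 s2 s3 s4 where s: "{s1, s2, s3, s4} \<subseteq> N" "sorted_wrt (lt R) [s1, s2, s3, s4]"
    "{s1, s2, s3} \<in> E" "{s1, s2, s4} \<notin> E" "{s1, s3, s4} \<notin> E" "{s2, s3, s4} \<notin> E"
    by (rule exists_chain4_one_edge)
  obtain g where g: "hg_aut N E g" "g s2 = a" "g s3 = b" "g s4 = x"
    using triple_transitive[of s2 s3 s4 a b x] s less by auto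
  have "lt R (g s1) a" "lt R (g s1) b"
    using aut_lt[OF g(1), of s1 s2] aut_lt[OF g(1), of s1 s3] s(1,2) g(2,3) by simp_all
  moreover have "{g s1, a, b} \<in> E" "{g s1, a, x} \<notin> E" "{g s1, b, x} \<notin> E"
    using aut_triple_edge_iff[OF g(1), of s1 s2 s3] aut_triple_edge_iff[OF g(1), of s1 s2 s4]
      aut_triple_edge_iff[OF g(1), of s1 s3 s4] s g(2-4)
    by simp_all
  ultimately show ?case using aut_in[OF g(1)] s(1) by blast
next
  case (sym a b)
  then show ?case by (auto simp: insert_commute)
qed

lemma extend_nonedge_above:
  assumes "a \<in> N" "b \<in> N" "a \<noteq> b" "x \<in> N" "lt R a x" "lt R b x" "{a, b, x} \<notin> E"
  shows "\<exists>w\<in>N. lt R a w \<and> lt R b w \<and> lt R w x \<and> {a, b, w} \<notin> E \<and> {a, w, x} \<notin> E \<and> {b, w, x} \<notin> E"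
  using linear assms
proof (induction a b rule: lt_wlog)
  case (less a b)
  obtain s1 s2 s3 s4 where s: "{s1, s2, s3, s4} \<subseteq> N" "sorted_wrt (lt R) [s1, s2, s3, s4]"
    "{s1, s2, s3} \<notin> E" "{s1, s2, s4} \<notin> E" "{s1, s3, s4} \<notin> E" "{s2, s3, s4} \<notin> E"
    by (rule exists_chain4_empty)
  obtain g where g: "hg_aut N E g" "g s1 = a" "g s2 = b" "g s4 = x"
    using triple_transitive[of s1 s2 s4 a b x] s less by auto
  have "lt R b (g s3)" "lt R (g s3) x"
    using aut_lt[OF g(1), of s2 s3] aut_lt[OF g(1), of s3 s4] s(1,2) g(3,4) by simp_all
  moreover have "{a, b, g s3} \<notin> E" "{a, g s3, x} \<notin> E" "{b, g s3, x} \<notin> E"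
    using aut_triple_edge_iff[OF g(1), of s1 s2 s3] aut_triple_edge_iff[OF g(1), of s1 s3 s4]
      aut_triple_edge_iff[OF g(1), of s2 s3 s4] s g(2-4)
    by simp_all
  ultimately show ?case using aut_in[OF g(1)] s(1) lt_trans[OF linear less(3)] by blast
next
  case (sym a b)
  then show ?case by (auto simp: insert_commute)
qed

lemma Crel_compatible:
  assumes "lt R x y" "lt R y z"
  shows "Crel E R x y z \<or> Crel E R z x y"
proof (cases "{x, y, z} \<in> E")
  case True
  then show ?thesis using Crel_below[OF assms(1) lt_trans[OF linear assms]] assms(2) lt_def by metis
next
  case False
  then have "{z, x, y} \<notin> E" by (simp add: insert_commute)
  then show ?thesis using Crel_above[OF lt_trans[OF linear assms] assms(2)] assms(1) lt_def by metis
qed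

lemma Crel_lower_witness:
  assumes "x \<in> N" "y \<in> N" "z \<in> N" "Crel E R x y z"
  shows "\<exists>w\<in>N. Crel E R w y z \<and> Crel E R x y w \<and> lt R w y \<and> lt R w z"
  using assms(4)
proof (cases rule: Crel_cases)
  case equal
  then consider "lt R x y" | "lt R y x" using lt_total[OF linear assms(1,2)] by blast
  then show ?thesis
  proof cases
    case 1
    then obtain w where w: "w \<in> N" "lt R x w" "lt R w y" "{x, w, y} \<in> E"
      using exists_between[OF assms(1,2)] by blast
    have "{x, y, w} \<in> E" using w(4) by (simp add: insert_commute)
    then have "Crel E R x y w" using Crel_below[OF 1 w(2) lt_imp_neq[OF w(3), symmetric]] by blast
    then show ?thesis using w Crel_equal[OF lt_imp_neq[OF w(3), symmetric]] equal by blast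
  next
    case 2
    then obtain w where w: "w \<in> N" "lt R w y" "{w, y, x} \<notin> E"
      using exists_below[OF assms(2,1)] by blast
    have "{x, y, w} \<notin> E" using w(3) by (simp add: insert_commute)
    then have "Crel E R x y w"
      using Crel_above[OF 2 lt_trans[OF linear w(2) 2] lt_imp_neq[OF w(2), symmetric]] by blast
    then show ?thesis using w Crel_equal[OF lt_imp_neq[OF w(2), symmetric]] equal by blast
  qed
next
  case below
  then obtain w where w: "w \<in> N" "lt R x w" "lt R w y" "lt R w z" "{w, y, z} \<in> E" "{x, y, w} \<in> E"
    using extend_edge_below[OF assms(2,3) _ assms(1)] by blast
  then show ?thesis
    using Crel_below[OF w(3,4) below(1)] Crel_below[OF below(2) w(2) lt_imp_neq[OF w(3), symmetric]]
    by blast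
next
  case above
  then have "{y, z, x} \<notin> E" by (simp add: insert_commute)
  then obtain w where w: "w \<in> N" "lt R w y" "lt R w z" "{w, y, z} \<in> E" "{w, y, x} \<notin> E"
    using extend_nonedge_below[OF assms(2,3) above(1) assms(1) above(2,3)] by blast
  have "{x, y, w} \<notin> E" using w(5) by (simp add: insert_commute)
  then show ?thesis
    using Crel_below[OF w(2,3) above(1) w(4)]
      Crel_above[OF above(2) lt_trans[OF linear w(2) above(2)] lt_imp_neq[OF w(2), symmetric]] w(1-3)
    by blast
qed

lemma Crel_upper_witness:
  assumes "x \<in> N" "y \<in> N" "z \<in> N" "Crel E R x y z"
  shows "\<exists>w\<in>N. Crel E R w y z \<and> Crel E R x y w \<and> lt R y w \<and> lt R z w"
  using assms(4)
proof (cases rule: Crel_cases)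
  case equal
  then consider "lt R x y" | "lt R y x" using lt_total[OF linear assms(1,2)] by blast
  then show ?thesis
  proof cases
    case 1
    then obtain w where w: "w \<in> N" "lt R y w" "{x, y, w} \<in> E"
      using exists_above[OF assms(1,2)] by blast
    then have "Crel E R x y w"
      using Crel_below[OF 1 lt_trans[OF linear 1 w(2)] lt_imp_neq[OF w(2)]] by blast
    then show ?thesis using w Crel_equal[OF lt_imp_neq[OF w(2)]] equal by blast
  next
    case 2
    then obtain w where w: "w \<in> N" "lt R y w" "lt R w x" "{y, w, x} \<notin> E"
      using exists_between[OF assms(2,1)] by blast
    have "{x, y, w} \<notin> E" using w(4) by (simp add: insert_commute)
    then have "Crel E R x y w" using Crel_above[OF 2 w(3) lt_imp_neq[OF w(2)]] by blast
    then show ?thesis using w Crel_equal[OF lt_imp_neq[OF w(2)]] equal by blast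
  qed
next
  case below
  then obtain w where w: "w \<in> N" "lt R y w" "lt R z w" "{y, z, w} \<notin> E" "{x, y, w} \<in> E"
    using extend_edge_above[OF assms(2,3) _ assms(1)] by blast
  have "{w, y, z} \<notin> E" using w(4) by (simp add: insert_commute)
  then show ?thesis
    using Crel_above[OF w(2,3) below(1)]
      Crel_below[OF below(2) lt_trans[OF linear below(2) w(2)] lt_imp_neq[OF w(2)] w(5)] w(1-3)
    by blast
next
  case above
  then have "{y, z, x} \<notin> E" by (simp add: insert_commute)
  then obtain w where w: "w \<in> N" "lt R y w" "lt R z w" "lt R w x" "{y, z, w} \<notin> E" "{y, w, x} \<notin> E"
    using extend_nonedge_above[OF assms(2,3) above(1) assms(1) above(2,3)] by blast
  have "{w, y, z} \<notin> E" "{x, y, w} \<notin> E" using w(5,6) by (simp_all add: insert_commute)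
  then show ?thesis
    using Crel_above[OF w(2,3) above(1)] Crel_above[OF above(2) w(4) lt_imp_neq[OF w(2)]] w(1-3)
    by blast
qed

end

theorem lemma3p11:
  fixes N :: "'a set" and E :: "'a set set" and R :: "'a rel"
  assumes "standing_assms N E R"
  shows "(\<forall>x\<in>N. \<forall>y\<in>N. \<forall>z\<in>N. lt R x y \<and> lt R y z \<longrightarrow> Crel E R x y z \<or> Crel E R z x y)
       \<and> (\<forall>x\<in>N. \<forall>y\<in>N. \<forall>z\<in>N. Crel E R x y z \<longrightarrow>
           (\<exists>w1\<in>N. Crel E R w1 y z \<and> Crel E R x y w1 \<and> lt R w1 y \<and> lt R w1 z)
         \<and> (\<exists>w2\<in>N. Crel E R w2 y z \<and> Crel E R x y w2 \<and> lt R y w2 \<and> lt R z w2))"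
proof -
  interpret ordered_homogeneous_hypergraph N E R by unfold_locales (fact assms)
  show ?thesis using Crel_compatible Crel_lower_witness Crel_upper_witness by blast
qed

end
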